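(* Let $(n_1,\dots,n_K)$ be a multinomial random variable with parameters $n\ge1$ and $(p_1,\dots,p_K)$. For any $\delta>0$, $$\Pr\Big(\sum_{i=1}^Kp_i^2>\sum_{i=1}^K\Big(\frac{n_i}{n}\Big)^2+2\sqrt{\frac2n\ln\frac K\delta}\Big)<\delta.$$ *)

theory Defs
  imports "HOL-Probability.Probability"
begin

text \<open>Categorical distribution on the categories 0,...,K-1 with probabilities p 0, ..., p (K-1).
  (Only meaningful when the p i are nonnegative and sum to 1 over the K categories.)\<close>
definition categorical_pmf :: "nat \<Rightarrow> (nat \<Rightarrow> real) \<Rightarrow> nat pmf" where
  "categorical_pmf K p = embed_pmf (\<lambda>i. if i < K then p i else 0)"

fun iid_list_pmf :: "nat \<Rightarrow> 'a pmf \<Rightarrow> 'a list pmf" where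
  "iid_list_pmf 0 d = return_pmf []"
| "iid_list_pmf (Suc n) d = bind_pmf d (\<lambda>x. map_pmf (Cons x) (iid_list_pmf n d))"

definition multinomial_pmf :: "nat \<Rightarrow> nat \<Rightarrow> (nat \<Rightarrow> real) \<Rightarrow> (nat \<Rightarrow> nat) pmf" where
  "multinomial_pmf n K p =
     map_pmf (\<lambda>xs i. length (filter (\<lambda>x. x = i) xs)) (iid_list_pmf n (categorical_pmf K p))"

end

theory Submission
  imports Defs
begin

text \<open>
  If \<open>\<Sum> p\<^sub>i\<^sup>2\<close> exceeds \<open>\<Sum> (n\<^sub>i/n)\<^sup>2\<close> by more than \<open>2\<epsilon>\<close>, then, since
  \<open>p\<^sub>i\<^sup>2 - q\<^sub>i\<^sup>2 = (p\<^sub>i - q\<^sub>i)(p\<^sub>i + q\<^sub>i)\<close> and \<open>\<Sum> (p\<^sub>i + q\<^sub>i) \<le> 2\<close>, some empirical frequency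
  \<open>n\<^sub>i/n\<close> falls more than \<open>\<epsilon>\<close> below \<open>p\<^sub>i\<close>. Each count \<open>n\<^sub>i\<close> is binomial with parameters
  \<open>n, p\<^sub>i\<close>, so by Hoeffding's inequality and a union bound the probability is at most
  \<open>K exp (-2n\<epsilon>\<^sup>2)\<close>, which for \<open>\<epsilon> = sqrt (2/n ln (K/\<delta>))\<close> equals \<open>\<delta> (\<delta>/K)\<^sup>3 < \<delta>\<close>
  unless \<open>\<delta> \<ge> K\<close>; for \<open>\<delta> \<le> 1\<close> that leaves only \<open>K = \<delta> = 1\<close>, where the event is null.
\<close>

lemma pmf_categorical_pmf:
  assumes "\<And>i. i < K \<Longrightarrow> p i \<ge> 0" and "(\<Sum>i<K. p i) = 1"
  shows "pmf (categorical_pmf K p) x = (if x < K then p x else 0)"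
  unfolding categorical_pmf_def
proof (rule pmf_embed_pmf)
  show "\<And>x. 0 \<le> (if x < K then p x else 0)" using assms(1) by auto
  have "(\<integral>\<^sup>+ x. ennreal (if x < K then p x else 0) \<partial>count_space UNIV) = (\<Sum>x<K. ennreal (p x))"
    by (subst nn_integral_count_space'[of "{..<K}"]) auto
  also have "\<dots> = ennreal (\<Sum>x<K. p x)"
    using assms(1) by (intro sum_ennreal) auto
  finally show "(\<integral>\<^sup>+ x. ennreal (if x < K then p x else 0) \<partial>count_space UNIV) = 1"
    using assms(2) by simp
qed

lemma iid_list_pmf_eq_replicate_pmf: "iid_list_pmf n d = replicate_pmf n d"
  by (induction n) (simp_all add: map_pmf_def)

lemma map_pmf_map_iid_list_pmf:
  "map_pmf (map f) (iid_list_pmf n d) = iid_list_pmf n (map_pmf f d)"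
proof (induction n)
  case (Suc n)
  have "map_pmf (map f) (iid_list_pmf (Suc n) d)
      = d \<bind> (\<lambda>x. map_pmf (Cons (f x)) (map_pmf (map f) (iid_list_pmf n d)))"
    by (simp add: map_bind_pmf pmf.map_comp o_def)
  then show ?case by (simp add: Suc.IH bind_map_pmf)
qed simp

lemma map_pmf_eq_bernoulli_pmf:
  "map_pmf P d = bernoulli_pmf (measure_pmf.prob d {x. P x})"
proof (rule pmf_eqI)
  fix b :: bool
  have "measure_pmf.prob d {x. \<not> P x} = 1 - measure_pmf.prob d {x. P x}"
    using measure_pmf.prob_compl[of "{x. P x}" d] by (simp add: Compl_eq_Diff_UNIV[symmetric] Collect_neg_eq)
  then show "pmf (map_pmf P d) b = pmf (bernoulli_pmf (measure_pmf.prob d {x. P x})) b"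
    by (cases b) (auto simp: pmf_map vimage_def)
qed

lemma count_iid_list_pmf_eq_binomial_pmf:
  "map_pmf (\<lambda>xs. length (filter P xs)) (iid_list_pmf n d)
     = binomial_pmf n (measure_pmf.prob d {x. P x})"
proof -
  have "(\<lambda>xs. length (filter P xs)) = (length \<circ> filter id) \<circ> map P"
    by (auto simp: filter_map)
  then have "map_pmf (\<lambda>xs. length (filter P xs)) (iid_list_pmf n d)
      = map_pmf (length \<circ> filter id) (iid_list_pmf n (map_pmf P d))"
    by (simp only: pmf.map_comp[symmetric] map_pmf_map_iid_list_pmf)
  then show ?thesis
    by (simp add: map_pmf_eq_bernoulli_pmf binomial_pmf_altdef iid_list_pmf_eq_replicate_pmf)
qed

lemma map_multinomial_pmf_coordinate:
  assumes "\<And>i. i < K \<Longrightarrow> p i \<ge> 0" and "(\<Sum>i<K. p i) = 1" and "i < K"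
  shows "map_pmf (\<lambda>c. c i) (multinomial_pmf n K p) = binomial_pmf n (p i)"
proof -
  have "measure_pmf.prob (categorical_pmf K p) {x. x = i} = p i"
    using pmf_categorical_pmf[OF assms(1,2)] assms(3) by (simp add: measure_pmf_single)
  then show ?thesis
    unfolding multinomial_pmf_def pmf.map_comp o_def
    using count_iid_list_pmf_eq_binomial_pmf[of "\<lambda>x. x = i" n "categorical_pmf K p"] by simp
qed

lemma sum_multinomial_pmf_support_le:
  assumes "c \<in> set_pmf (multinomial_pmf n K p)"
  shows "(\<Sum>i<K. c i) \<le> n"
proof -
  obtain xs where xs: "length xs = n" and c: "c = (\<lambda>i. length (filter (\<lambda>x. x = i) xs))"
    using assms by (auto simp: multinomial_pmf_def iid_list_pmf_eq_replicate_pmf set_replicate_pmf)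
  have "(\<Sum>i<K. c i) = (\<Sum>i<K. count_list xs i)"
    by (simp add: c count_list_eq_length_filter eq_commute)
  also have "\<dots> \<le> (\<Sum>i\<in>{..<K} \<union> set xs. count_list xs i)"
    by (intro sum_mono2) auto
  also have "\<dots> = n"
    using xs by (subst sum_count_set) auto
  finally show ?thesis .
qed

lemma sum_squares_gap_imp_coordinate_gap:
  fixes p q :: "nat \<Rightarrow> real"
  assumes "\<And>i. i < K \<Longrightarrow> p i \<ge> 0" and "(\<Sum>i<K. p i) \<le> 1"
    and "\<And>i. i < K \<Longrightarrow> q i \<ge> 0" and "(\<Sum>i<K. q i) \<le> 1"
    and "\<epsilon> \<ge> 0"
    and "(\<Sum>i<K. (p i)\<^sup>2) > (\<Sum>i<K. (q i)\<^sup>2) + 2 * \<epsilon>"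
  shows "\<exists>i<K. q i < p i - \<epsilon>"
proof (rule ccontr)
  assume "\<not> ?thesis"
  then have gap: "\<And>i. i < K \<Longrightarrow> p i - q i \<le> \<epsilon>" by force
  have "(\<Sum>i<K. (p i)\<^sup>2) - (\<Sum>i<K. (q i)\<^sup>2) = (\<Sum>i<K. (p i - q i) * (p i + q i))"
    by (simp add: sum_subtractf[symmetric] power2_eq_square algebra_simps)
  also have "\<dots> \<le> (\<Sum>i<K. \<epsilon> * (p i + q i))"
    using gap assms(1,3) by (intro sum_mono mult_right_mono) auto
  also have "\<dots> = \<epsilon> * ((\<Sum>i<K. p i) + (\<Sum>i<K. q i))"
    by (simp add: sum_distrib_left[symmetric] sum.distrib)
  also have "\<dots> \<le> \<epsilon> * 2"
    using assms(2,4,5) by (intro mult_left_mono) auto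
  finally show False using assms(6) by simp
qed

lemma multinomial_sum_squares_tail_le:
  assumes "n \<ge> 1" and "\<And>i. i < K \<Longrightarrow> p i \<ge> 0" and "(\<Sum>i<K. p i) = 1" and "\<epsilon> \<ge> 0"
  shows "measure_pmf.prob (multinomial_pmf n K p)
           {c. (\<Sum>i<K. (p i)\<^sup>2) > (\<Sum>i<K. (real (c i) / real n)\<^sup>2) + 2 * \<epsilon>}
         \<le> (\<Sum>i<K. measure_pmf.prob (binomial_pmf n (p i)) {x. real x / real n < p i - \<epsilon>})"
    (is "measure_pmf.prob ?M ?E \<le> _")
proof -
  define A where "A i = {c. real (c i) / real n < p i - \<epsilon>}" for i
  have "?E \<inter> set_pmf ?M \<subseteq> (\<Union>i<K. A i)"
  proof
    fix c assume c: "c \<in> ?E \<inter> set_pmf ?M"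
    have "(\<Sum>i<K. real (c i) / real n) = real (\<Sum>i<K. c i) / real n"
      by (simp add: sum_divide_distrib)
    also have "\<dots> \<le> 1"
      using sum_multinomial_pmf_support_le[of c n K p] c assms(1) by (simp del: of_nat_sum)
    finally have "(\<Sum>i<K. real (c i) / real n) \<le> 1" .
    with sum_squares_gap_imp_coordinate_gap[of K p "\<lambda>i. real (c i) / real n" \<epsilon>] c assms(2-4)
    show "c \<in> (\<Union>i<K. A i)" unfolding A_def by auto
  qed
  then have "measure_pmf.prob ?M ?E \<le> measure_pmf.prob ?M (\<Union>i<K. A i)"
    by (subst measure_Int_set_pmf[symmetric]) (intro measure_pmf.finite_measure_mono; simp)
  also have "\<dots> \<le> (\<Sum>i<K. measure_pmf.prob ?M (A i))"
    by (intro measure_pmf.finite_measure_subadditive_finite) auto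
  also have "\<dots> = (\<Sum>i<K. measure_pmf.prob (binomial_pmf n (p i)) {x. real x / real n < p i - \<epsilon>})"
    by (intro sum.cong refl) (simp flip: map_multinomial_pmf_coordinate[OF assms(2,3)] add: A_def vimage_def)
  finally show ?thesis .
qed

lemma binomial_pmf_lower_tail_le:
  assumes "n \<ge> 1" and "p \<in> {0..1}" and "\<epsilon> \<ge> 0"
  shows "measure_pmf.prob (binomial_pmf n p) {x. real x / real n < p - \<epsilon>} \<le> exp (- 2 * real n * \<epsilon>\<^sup>2)"
proof -
  interpret binomial_distribution n p
    by unfold_locales (use assms(2) in auto)
  have "measure_pmf.prob (binomial_pmf n p) {x. real x / real n < p - \<epsilon>}
      \<le> measure_pmf.prob (binomial_pmf n p) {x. real x / real n \<le> p - \<epsilon>}"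
    by (intro measure_pmf.finite_measure_mono) auto
  also have "\<dots> \<le> exp (- 2 * real n * \<epsilon>\<^sup>2)"
    using prob_le'[of \<epsilon>] assms(1,3) by simp
  finally show ?thesis by simp
qed

lemma exp_hoeffding_exponent_eq:
  assumes "n \<ge> 1" and "\<delta> > 0" and "\<delta> \<le> real K"
  shows "exp (- 2 * real n * (sqrt (2 / real n * ln (real K / \<delta>)))\<^sup>2) = (\<delta> / K) ^ 4"
proof -
  have "exp (- 2 * real n * (sqrt (2 / real n * ln (real K / \<delta>)))\<^sup>2) = exp (4 * ln (\<delta> / K))"
    using assms by (simp add: ln_div)
  also have "\<dots> = (\<delta> / K) ^ 4"
    using assms by (simp add: exp_of_nat_mult[of 4, simplified])
  finally show ?thesis .
qed

theorem lemma8: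
  fixes n K :: nat and p :: "nat \<Rightarrow> real" and \<delta> :: real
  assumes "n \<ge> 1"
    and "\<And>i. i < K \<Longrightarrow> p i \<ge> 0"
    and "(\<Sum>i<K. p i) = 1"
    and "\<delta> > 0"
  shows "measure_pmf.prob (multinomial_pmf n K p)
           {c. (\<Sum>i<K. (p i)\<^sup>2) >
               (\<Sum>i<K. (real (c i) / real n)\<^sup>2) + 2 * sqrt (2 / real n * ln (real K / \<delta>))}
         < \<delta>"
proof (cases "\<delta> > 1")
  case True
  then show ?thesis using measure_pmf.prob_le_1 by (meson le_less_trans)
next
  case False
  define \<epsilon> where "\<epsilon> = sqrt (2 / real n * ln (real K / \<delta>))"
  define tail where "tail i = measure_pmf.prob (binomial_pmf n (p i)) {x. real x / real n < p i - \<epsilon>}" for i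
  have K: "K \<ge> 1" using assms(3) by (cases K) auto
  have p_le_1: "p i \<le> 1" if "i < K" for i
    using member_le_sum[of i "{..<K}" p] assms(2,3) that by auto
  have "\<epsilon> \<ge> 0" using False K assms(4) by (simp add: \<epsilon>_def)
  have "(\<Sum>i<K. tail i) < \<delta>"
  proof (cases "\<delta> < K")
    case True
    have "tail i \<le> (\<delta> / K) ^ 4" if "i < K" for i
      using binomial_pmf_lower_tail_le[of n "p i" \<epsilon>] exp_hoeffding_exponent_eq[of n \<delta> K]
        assms(1,2,4) p_le_1 that \<open>\<epsilon> \<ge> 0\<close> True
      by (simp add: tail_def \<epsilon>_def)
    then have "(\<Sum>i<K. tail i) \<le> \<delta> * (\<delta> / K) ^ 3"
      using sum_mono[of "{..<K}" tail "\<lambda>_. (\<delta> / K) ^ 4"] K by (simp add: field_simps eval_nat_numeral)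
    also have "\<dots> < \<delta>"
      using True assms(4) by (simp add: power_less_one_iff)
    finally show ?thesis .
  next
    case False
    then have "K = 1" "\<delta> = 1" using \<open>\<not> \<delta> > 1\<close> K by linarith+
    then have "p 0 = 1" "\<epsilon> = 0" using assms(3) by (simp_all add: \<epsilon>_def)
    then have "tail 0 = 0"
      using measure_Int_set_pmf[of "binomial_pmf n 1" "{x. real x / real n < 1}"] assms(1)
      by (simp add: tail_def)
    then show ?thesis using \<open>K = 1\<close> \<open>\<delta> = 1\<close> by simp
  qed
  then show ?thesis
    using multinomial_sum_squares_tail_le[OF assms(1-3) \<open>\<epsilon> \<ge> 0\<close>] by (simp add: \<epsilon>_def tail_def)
qed

end
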